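(* For any $n$-qubit pure state $\ket{\psi}$ and any integer $k\ge1$, the $nk$-qubit state $\ket{\psi}^{\otimes k}$ satisfies $\mathcal{C}(\ket{\psi}^{\otimes k})=1-\big(1-\mathcal{C}(\ket{\psi})\big)^k$.
   Context: For an $m$-qubit pure state $\ket{\phi}$, $\mathcal{C}(\ket{\phi})=1-\frac{1}{2^{m}}\sum_{\alpha}\mathrm{Tr}[\rho_\alpha^2]$, the sum over all subsets $\alpha$ of its $m$ qubits, $\rho_\alpha$ the reduced state on $\alpha$, $\mathrm{Tr}[\rho_\emptyset^2]=1$. *)

theory Defs
  imports Complex_Main
begin

text \<open>A basis state |b_0 ... b_{m-1}> is encoded by the set of qubit positions i < m with b_i = 1,
  i.e. by a subset of {..<m}.  Values of the function outside Pow {..<m} are irrelevant.\<close>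

definition pure_state :: "nat \<Rightarrow> (nat set \<Rightarrow> complex) \<Rightarrow> bool" where
  "pure_state m \<psi> \<longleftrightarrow> (\<Sum>S\<in>Pow {..<m}. (cmod (\<psi> S))\<^sup>2) = 1"

text \<open>Reduced density matrix rho_alpha = Tr_{complement of alpha} |psi><psi|, entries indexed by
  basis states x, y of the subsystem alpha (subsets of alpha).\<close>

definition reduced :: "nat \<Rightarrow> (nat set \<Rightarrow> complex) \<Rightarrow> nat set \<Rightarrow> nat set \<Rightarrow> nat set \<Rightarrow> complex" where
  "reduced m \<psi> \<alpha> x y = (\<Sum>z\<in>Pow ({..<m} - \<alpha>). \<psi> (x \<union> z) * cnj (\<psi> (y \<union> z)))"

definition purity :: "nat \<Rightarrow> (nat set \<Rightarrow> complex) \<Rightarrow> nat set \<Rightarrow> complex" where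
  "purity m \<psi> \<alpha> = (\<Sum>x\<in>Pow \<alpha>. \<Sum>y\<in>Pow \<alpha>. reduced m \<psi> \<alpha> x y * reduced m \<psi> \<alpha> y x)"

definition conc :: "nat \<Rightarrow> (nat set \<Rightarrow> complex) \<Rightarrow> real" where
  "conc m \<psi> = 1 - (1 / 2 ^ m) * (\<Sum>\<alpha>\<in>Pow {..<m}. Re (purity m \<psi> \<alpha>))"

definition tensor_power :: "nat \<Rightarrow> nat \<Rightarrow> (nat set \<Rightarrow> complex) \<Rightarrow> (nat set \<Rightarrow> complex)" where
  "tensor_power n k \<psi> = (\<lambda>S. \<Prod>j<k. \<psi> {i. i < n \<and> j * n + i \<in> S})"

end

theory Submission imports Defs begin

text \<open>Write \<open>\<Sigma>(U, \<psi>)\<close> for the sum of \<open>Tr[\<rho>\<^sub>\<alpha>\<^sup>2]\<close> over all subsets \<open>\<alpha>\<close> of the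
  qubit set \<open>U\<close>, so that \<open>1 - C(\<psi>) = \<Sigma>(U, \<psi>) / 2\<^sup>m\<close>. If a state on \<open>U \<union> V\<close> (disjoint) is
  a product of a state on \<open>U\<close> and one on \<open>V\<close>, then each \<open>\<alpha> \<subseteq> U \<union> V\<close> splits as
  \<open>\<alpha>\<^sub>1 \<union> \<alpha>\<^sub>2\<close>, the reduced state on \<open>\<alpha>\<close> is the tensor product of the reduced states on
  \<open>\<alpha>\<^sub>1\<close> and \<open>\<alpha>\<^sub>2\<close>, and the purity factorises; hence \<open>\<Sigma>\<close> is multiplicative. Since
  relabelling qubits does not change \<open>\<Sigma>\<close>, the \<open>k\<close>-fold tensor power has
  \<open>\<Sigma> = \<Sigma>(\<psi>)\<^sup>k\<close>, and dividing by \<open>2\<^sup>n\<^sup>k\<close> gives \<open>(1 - C(\<psi>))\<^sup>k\<close>.\<close>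

text \<open>\<open>reduced\<close> and \<open>purity\<close> with the qubit set \<open>{..<m}\<close> replaced by an arbitrary set \<open>U\<close>,
  so that the factors of a product state and relabelled copies are states of the same kind.\<close>

definition reduced_on :: "nat set \<Rightarrow> (nat set \<Rightarrow> complex) \<Rightarrow> nat set \<Rightarrow> nat set \<Rightarrow> nat set \<Rightarrow> complex" where
  "reduced_on U \<psi> \<alpha> x y = (\<Sum>z\<in>Pow (U - \<alpha>). \<psi> (x \<union> z) * cnj (\<psi> (y \<union> z)))"

definition purity_on :: "nat set \<Rightarrow> (nat set \<Rightarrow> complex) \<Rightarrow> nat set \<Rightarrow> complex" where
  "purity_on U \<psi> \<alpha> = (\<Sum>x\<in>Pow \<alpha>. \<Sum>y\<in>Pow \<alpha>. reduced_on U \<psi> \<alpha> x y * reduced_on U \<psi> \<alpha> y x)"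

definition total_purity :: "nat set \<Rightarrow> (nat set \<Rightarrow> complex) \<Rightarrow> complex" where
  "total_purity U \<psi> = (\<Sum>\<alpha>\<in>Pow U. purity_on U \<psi> \<alpha>)"

lemma sum_Pow_Un_disjoint:
  assumes "A \<inter> B = {}"
  shows "(\<Sum>z\<in>Pow (A \<union> B). h z) = (\<Sum>a\<in>Pow A. \<Sum>b\<in>Pow B. h (a \<union> b))"
proof -
  have "bij_betw (\<lambda>(a, b). a \<union> b) (Pow A \<times> Pow B) (Pow (A \<union> B))"
    by (rule bij_betw_byWitness[where f' = "\<lambda>z. (z \<inter> A, z \<inter> B)"]) (use assms in auto)
  then show ?thesis
    by (simp add: sum.reindex_bij_betw[symmetric] sum.cartesian_product case_prod_unfold)
qed

lemma sum_Pow_image: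
  assumes "inj_on h A"
  shows "(\<Sum>z\<in>Pow (h ` A). F z) = (\<Sum>z\<in>Pow A. F (h ` z))"
  by (rule sum.reindex_bij_betw[OF bij_betw_image_Pow[OF inj_on_imp_bij_betw[OF assms]], symmetric])

lemma reduced_on_swap: "reduced_on U \<psi> \<alpha> y x = cnj (reduced_on U \<psi> \<alpha> x y)"
  unfolding reduced_on_def by (simp add: mult.commute)

lemma total_purity_real: "total_purity U \<psi> = of_real (Re (total_purity U \<psi>))"
proof -
  have "cnj (reduced_on U \<psi> \<alpha> x y * reduced_on U \<psi> \<alpha> y x)
      = reduced_on U \<psi> \<alpha> x y * reduced_on U \<psi> \<alpha> y x" for \<alpha> x y
    by (simp add: reduced_on_swap[of U \<psi> \<alpha> y x] mult.commute)
  then have "cnj (total_purity U \<psi>) = total_purity U \<psi>"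
    unfolding total_purity_def purity_on_def by simp
  then show ?thesis
    by (metis Reals_cnj_iff of_real_Re)
qed

context
  fixes U V :: "nat set" and \<Phi> f g :: "nat set \<Rightarrow> complex"
  assumes disjoint: "U \<inter> V = {}"
    and product: "\<And>S. S \<subseteq> U \<union> V \<Longrightarrow> \<Phi> S = f (S \<inter> U) * g (S \<inter> V)"
begin

lemma reduced_on_product:
  assumes "\<alpha>\<^sub>1 \<subseteq> U" "\<alpha>\<^sub>2 \<subseteq> V" "x\<^sub>1 \<subseteq> \<alpha>\<^sub>1" "y\<^sub>1 \<subseteq> \<alpha>\<^sub>1" "x\<^sub>2 \<subseteq> \<alpha>\<^sub>2" "y\<^sub>2 \<subseteq> \<alpha>\<^sub>2"
  shows "reduced_on (U \<union> V) \<Phi> (\<alpha>\<^sub>1 \<union> \<alpha>\<^sub>2) (x\<^sub>1 \<union> x\<^sub>2) (y\<^sub>1 \<union> y\<^sub>2)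
       = reduced_on U f \<alpha>\<^sub>1 x\<^sub>1 y\<^sub>1 * reduced_on V g \<alpha>\<^sub>2 x\<^sub>2 y\<^sub>2"
proof -
  have complement: "U \<union> V - (\<alpha>\<^sub>1 \<union> \<alpha>\<^sub>2) = (U - \<alpha>\<^sub>1) \<union> (V - \<alpha>\<^sub>2)"
    using disjoint assms by auto
  have factor: "\<Phi> (x \<union> x' \<union> (a \<union> b)) = f (x \<union> a) * g (x' \<union> b)"
    if "x \<subseteq> U" "x' \<subseteq> V" "a \<subseteq> U - \<alpha>\<^sub>1" "b \<subseteq> V - \<alpha>\<^sub>2" for x x' a b
  proof -
    have "(x \<union> x' \<union> (a \<union> b)) \<inter> U = x \<union> a" "(x \<union> x' \<union> (a \<union> b)) \<inter> V = x' \<union> b"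
      using that disjoint by auto
    then show ?thesis
      using product[of "x \<union> x' \<union> (a \<union> b)"] that by auto
  qed
  have "reduced_on (U \<union> V) \<Phi> (\<alpha>\<^sub>1 \<union> \<alpha>\<^sub>2) (x\<^sub>1 \<union> x\<^sub>2) (y\<^sub>1 \<union> y\<^sub>2)
     = (\<Sum>a\<in>Pow (U - \<alpha>\<^sub>1). \<Sum>b\<in>Pow (V - \<alpha>\<^sub>2).
          \<Phi> (x\<^sub>1 \<union> x\<^sub>2 \<union> (a \<union> b)) * cnj (\<Phi> (y\<^sub>1 \<union> y\<^sub>2 \<union> (a \<union> b))))"
    unfolding reduced_on_def complement by (rule sum_Pow_Un_disjoint) (use disjoint in auto)
  also have "\<dots> = (\<Sum>a\<in>Pow (U - \<alpha>\<^sub>1). \<Sum>b\<in>Pow (V - \<alpha>\<^sub>2).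
          (f (x\<^sub>1 \<union> a) * cnj (f (y\<^sub>1 \<union> a))) * (g (x\<^sub>2 \<union> b) * cnj (g (y\<^sub>2 \<union> b))))"
    by (intro sum.cong refl) (use assms in \<open>simp add: factor mult_ac\<close>)
  also have "\<dots> = reduced_on U f \<alpha>\<^sub>1 x\<^sub>1 y\<^sub>1 * reduced_on V g \<alpha>\<^sub>2 x\<^sub>2 y\<^sub>2"
    unfolding reduced_on_def sum_product ..
  finally show ?thesis .
qed

lemma purity_on_product:
  assumes "\<alpha>\<^sub>1 \<subseteq> U" "\<alpha>\<^sub>2 \<subseteq> V"
  shows "purity_on (U \<union> V) \<Phi> (\<alpha>\<^sub>1 \<union> \<alpha>\<^sub>2) = purity_on U f \<alpha>\<^sub>1 * purity_on V g \<alpha>\<^sub>2"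
proof -
  let ?r = "reduced_on U f \<alpha>\<^sub>1" and ?s = "reduced_on V g \<alpha>\<^sub>2"
  have "\<alpha>\<^sub>1 \<inter> \<alpha>\<^sub>2 = {}"
    using assms disjoint by auto
  have "purity_on (U \<union> V) \<Phi> (\<alpha>\<^sub>1 \<union> \<alpha>\<^sub>2)
     = (\<Sum>x\<^sub>1\<in>Pow \<alpha>\<^sub>1. \<Sum>x\<^sub>2\<in>Pow \<alpha>\<^sub>2. \<Sum>y\<^sub>1\<in>Pow \<alpha>\<^sub>1. \<Sum>y\<^sub>2\<in>Pow \<alpha>\<^sub>2.
          (?r x\<^sub>1 y\<^sub>1 * ?r y\<^sub>1 x\<^sub>1) * (?s x\<^sub>2 y\<^sub>2 * ?s y\<^sub>2 x\<^sub>2))"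
    unfolding purity_on_def sum_Pow_Un_disjoint[OF \<open>\<alpha>\<^sub>1 \<inter> \<alpha>\<^sub>2 = {}\<close>]
    by (intro sum.cong refl) (simp add: reduced_on_product[OF assms] mult_ac)
  also have "\<dots> = purity_on U f \<alpha>\<^sub>1 * purity_on V g \<alpha>\<^sub>2"
    unfolding purity_on_def sum_product ..
  finally show ?thesis .
qed

lemma total_purity_product: "total_purity (U \<union> V) \<Phi> = total_purity U f * total_purity V g"
proof -
  have "total_purity (U \<union> V) \<Phi> = (\<Sum>\<alpha>\<^sub>1\<in>Pow U. \<Sum>\<alpha>\<^sub>2\<in>Pow V. purity_on (U \<union> V) \<Phi> (\<alpha>\<^sub>1 \<union> \<alpha>\<^sub>2))"
    unfolding total_purity_def by (rule sum_Pow_Un_disjoint[OF disjoint])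
  also have "\<dots> = (\<Sum>\<alpha>\<^sub>1\<in>Pow U. \<Sum>\<alpha>\<^sub>2\<in>Pow V. purity_on U f \<alpha>\<^sub>1 * purity_on V g \<alpha>\<^sub>2)"
    by (intro sum.cong refl) (simp add: purity_on_product)
  also have "\<dots> = total_purity U f * total_purity V g"
    unfolding total_purity_def sum_product ..
  finally show ?thesis .
qed

end

lemma total_purity_relabel:
  assumes inj: "inj_on h U"
  shows "total_purity (h ` U) (\<lambda>T. \<psi> (h -` T \<inter> U)) = total_purity U \<psi>"
    (is "total_purity _ ?\<psi>' = _")
proof -
  have pullback: "h -` h ` x \<inter> U = x" if "x \<subseteq> U" for x
    using inj that by (auto simp: inj_on_def)
  have reduced: "reduced_on (h ` U) ?\<psi>' (h ` \<alpha>) (h ` x) (h ` y) = reduced_on U \<psi> \<alpha> x y"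
    if "\<alpha> \<subseteq> U" "x \<subseteq> \<alpha>" "y \<subseteq> \<alpha>" for \<alpha> x y
  proof -
    have complement: "h ` U - h ` \<alpha> = h ` (U - \<alpha>)"
      using inj that by (simp add: inj_on_image_set_diff)
    have "reduced_on (h ` U) ?\<psi>' (h ` \<alpha>) (h ` x) (h ` y)
        = (\<Sum>z\<in>Pow (U - \<alpha>). ?\<psi>' (h ` (x \<union> z)) * cnj (?\<psi>' (h ` (y \<union> z))))"
      unfolding reduced_on_def complement image_Un by (intro sum_Pow_image inj_on_subset[OF inj]) auto
    also have "\<dots> = reduced_on U \<psi> \<alpha> x y"
      unfolding reduced_on_def using that by (intro sum.cong refl) (subst (1 2) pullback; auto)
    finally show ?thesis .
  qed
  have purity: "purity_on (h ` U) ?\<psi>' (h ` \<alpha>) = purity_on U \<psi> \<alpha>" if "\<alpha> \<subseteq> U" for \<alpha>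
    unfolding purity_on_def sum_Pow_image[OF inj_on_subset[OF inj that]]
    by (intro sum.cong refl) (simp add: reduced that)
  show ?thesis
    unfolding total_purity_def sum_Pow_image[OF inj] by (intro sum.cong refl) (simp add: purity)
qed

lemma conc_eq_total_purity: "conc m \<psi> = 1 - Re (total_purity {..<m} \<psi>) / 2 ^ m"
  unfolding conc_def total_purity_def purity_on_def reduced_on_def purity_def reduced_def
  by (simp add: Re_sum)

lemma tensor_power_Suc:
  "tensor_power n (Suc k) \<psi> S
     = tensor_power n k \<psi> (S \<inter> {..<n * k}) * \<psi> ((+) (n * k) -` S \<inter> {..<n})"
proof -
  have "j * n + i < n * k" if "j < k" "i < n" for i j
  proof -
    have "(j + 1) * n \<le> k * n"
      using that(1) by (intro mult_le_mono1) simp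
    then show ?thesis
      using that(2) by (simp add: mult.commute)
  qed
  then have "{i. i < n \<and> j * n + i \<in> S \<inter> {..<n * k}} = {i. i < n \<and> j * n + i \<in> S}" if "j < k" for j
    using that by auto
  moreover have "(+) (n * k) -` S \<inter> {..<n} = {i. i < n \<and> k * n + i \<in> S}"
    by (auto simp: mult.commute)
  ultimately show ?thesis
    unfolding tensor_power_def by simp
qed

lemma total_purity_tensor_power:
  "total_purity {..<n * k} (tensor_power n k \<psi>) = total_purity {..<n} \<psi> ^ k"
proof (induction k)
  case 0
  show ?case
    by (simp add: total_purity_def purity_on_def reduced_on_def tensor_power_def)
next
  case (Suc k)
  let ?shift = "(+) (n * k)"
  have split: "{..<n * Suc k} = {..<n * k} \<union> ?shift ` {..<n}"
    using lessThan_atLeast0 by fastforce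
  have "total_purity {..<n * Suc k} (tensor_power n (Suc k) \<psi>)
      = total_purity {..<n * k} (tensor_power n k \<psi>)
        * total_purity (?shift ` {..<n}) (\<lambda>T. \<psi> (?shift -` T \<inter> {..<n}))"
  proof (unfold split, rule total_purity_product)
    have "?shift -` (S \<inter> ?shift ` {..<n}) \<inter> {..<n} = ?shift -` S \<inter> {..<n}" for S
      by auto
    then show "tensor_power n (Suc k) \<psi> S
        = tensor_power n k \<psi> (S \<inter> {..<n * k}) * \<psi> (?shift -` (S \<inter> ?shift ` {..<n}) \<inter> {..<n})" for S
      by (simp only: tensor_power_Suc)
  qed auto
  also have "\<dots> = total_purity {..<n} \<psi> ^ Suc k"
    by (simp add: total_purity_relabel Suc.IH)
  finally show ?case .
qed

theorem mainTheorem13: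
  fixes n k :: nat and \<psi> :: "nat set \<Rightarrow> complex"
  assumes "pure_state n \<psi>" and "k \<ge> 1"
  shows "conc (n * k) (tensor_power n k \<psi>) = 1 - (1 - conc n \<psi>) ^ k"
proof -
  define p where "p = Re (total_purity {..<n} \<psi>)"
  have "Re (total_purity {..<n * k} (tensor_power n k \<psi>)) = p ^ k"
    unfolding total_purity_tensor_power p_def
    by (subst total_purity_real) (simp only: of_real_power[symmetric] Re_complex_of_real)
  then show ?thesis
    unfolding conc_eq_total_purity p_def[symmetric] by (simp add: power_mult power_divide)
qed

end
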